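(* Consider the no-CoT case $k=0$, so that the evaluation loss is $$\mathcal L^{\mathrm{Eval}}(V,W)=\tfrac12\,\mathbb E_{X,\mathbf w^*}\Big[\big\|f_{\mathrm{LSA}}(Z_0;V,W)_{[:,-1]}-(0_d,0,\mathbf w^*,1)\big\|^2\Big].$$ If $(V^*,W^* )$ is a global minimizer of $\mathcal L^{\mathrm{Eval}}$, then the corresponding one-layer transformer implements one step of gradient descent from $0$ on the linear least-squares objective with learning rate $\eta^*=\frac{n}{n+d+1}$. That is, it outputs $$f_{\mathrm{LSA}}(Z_0;V^*,W^* )_{[:,-1]}=\Big(0_d,\,0,\,\tfrac{\eta^*}{n}X\mathbf y^\top,\,1\Big).$$
   Context: Let $d,n\ge 1$ and $d_e=2d+2$. Sample $\mathbf w^*\sim\mathcal N(0,I_d)$ and, independently, $\mathbf x_1,\dots,\mathbf x_n$ i.i.d. $\mathcal N(0,I_d)$. Set $y_i=\mathbf w^{*\top}\mathbf x_i$, $X=[\mathbf x_1,\dots,\mathbf x_n]\in\mathbb R^{d\times n}$ and $\mathbf y=(y_1,\dots,y_n)\in\mathbb R^{1\times n}$. For $V,W\in\mathbb R^{d_e\times d_e}$ and a matrix $Z$ with $d_e$ rows, the one-layer linear self-attention model is $f_{\mathrm{LSA}}(Z;V,W)=Z+VZ\,\frac{Z^\top WZ}{n}$. Its prediction is the last column $f_{\mathrm{LSA}}(Z;V,W)_{[:,-1]}$. The input is $$Z_0=\begin{bmatrix}X&0_d\\ \mathbf y&0\\ 0_{d\times n}&\mathbf w_0\\ 0_{1\times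 n}&1\end{bmatrix}\in\mathbb R^{d_e\times(n+1)},\qquad \mathbf w_0=0_d.$$ The goal of the model (in-context weight prediction) is to output $(0_d,0,\mathbf w^*,1)$. *)

theory Defs
  imports "HOL-Probability.Probability" "Jordan_Normal_Form.Matrix"
begin

definition std_gauss :: "real measure" where
  "std_gauss = density lborel std_normal_density"

definition data_measure :: "nat \<Rightarrow> nat \<Rightarrow> ((nat \<times> nat \<Rightarrow> real) \<times> (nat \<Rightarrow> real)) measure" where
  "data_measure d n = (PiM ({..<d} \<times> {..<n}) (\<lambda>_. std_gauss)) \<Otimes>\<^sub>M (PiM {..<d} (\<lambda>_. std_gauss))"

definition de :: "nat \<Rightarrow> nat" where
  "de d = 2 * d + 2"

definition labels :: "real mat \<Rightarrow> real vec \<Rightarrow> real vec" where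
  "labels X w = vec (dim_col X) (\<lambda>j. w \<bullet> col X j)"

definition Z_in :: "real mat \<Rightarrow> real vec \<Rightarrow> real vec \<Rightarrow> real mat" where
  "Z_in X w w0 = (let d = dim_row X; n = dim_col X; y = labels X w in
     mat (2 * d + 2) (n + 1) (\<lambda>(i, j).
       if j < n then (if i < d then X $$ (i, j) else if i = d then y $ j else 0)
       else (if d < i \<and> i \<le> 2 * d then w0 $ (i - d - 1)
             else if i = 2 * d + 1 then 1 else 0)))"

definition f_LSA :: "nat \<Rightarrow> real mat \<Rightarrow> real mat \<Rightarrow> real mat \<Rightarrow> real mat" where
  "f_LSA n Z V W = Z + (1 / real n) \<cdot>\<^sub>m (V * Z * (transpose_mat Z * W * Z))"

definition lsa_pred :: "nat \<Rightarrow> real mat \<Rightarrow> real mat \<Rightarrow> real mat \<Rightarrow> real vec" where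
  "lsa_pred n Z V W = col (f_LSA n Z V W) (dim_col Z - 1)"

definition target :: "nat \<Rightarrow> real vec \<Rightarrow> real vec" where
  "target d w = vec (2 * d + 2) (\<lambda>i. if d < i \<and> i \<le> 2 * d then w $ (i - d - 1)
                                     else if i = 2 * d + 1 then 1 else 0)"

definition sq_norm_vec :: "real vec \<Rightarrow> real" where
  "sq_norm_vec v = v \<bullet> v"

definition X_of :: "nat \<Rightarrow> nat \<Rightarrow> (nat \<times> nat \<Rightarrow> real) \<Rightarrow> real mat" where
  "X_of d n f = mat d n f"

definition w_of :: "nat \<Rightarrow> (nat \<Rightarrow> real) \<Rightarrow> real vec" where
  "w_of d g = vec d g"

text \<open>Evaluation loss (k = 0): 1/2 E ||f_LSA(Z_0;V,W)_{:,-1} - (0,0,w*,1)||^2, w_0 = 0.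
  Written as a nonnegative integral (the integrand is nonnegative).\<close>
definition loss_eval :: "nat \<Rightarrow> nat \<Rightarrow> real mat \<Rightarrow> real mat \<Rightarrow> ennreal" where
  "loss_eval d n V W =
     (\<integral>\<^sup>+ s. ennreal ((1/2) * sq_norm_vec
        (lsa_pred n (Z_in (X_of d n (fst s)) (w_of d (snd s)) (0\<^sub>v d)) V W
          - target d (w_of d (snd s)))) \<partial>data_measure d n)"

end

theory Submission
  imports Defs
begin

(* Write the prediction error of (V, W) coordinatewise as e + D, where e is the error of one
   gradient step from 0 with learning rate n / (n + d + 1), i.e. e = (X X^T / (n + d + 1) - I) w*
   on the w-block, and D is the difference between the transformer's output and that step.
   Each output coordinate is a linear combination of entries of X X^T, X y^T, |y|^2 and a
   constant. Since e is linear in w* with coefficients depending on X only, it is orthogonal in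
   L^2 to the terms that are even in w*, and the fourth moment E[(X X^T)^2] = n (n + d + 1) I
   makes it orthogonal to X y^T as well. So the loss is E|e|^2 / 2 + E|D|^2 / 2, a global
   minimizer has D = 0 almost surely, and as D is continuous and the Gaussian law charges every
   box, D = 0 everywhere. *)

section \<open>Functions with finite moments\<close>

definition finite_moments :: "'a measure \<Rightarrow> ('a \<Rightarrow> real) \<Rightarrow> bool" where
  "finite_moments M f \<longleftrightarrow> f \<in> borel_measurable M \<and> (\<forall>k. integrable M (\<lambda>x. \<bar>f x\<bar> ^ k))"

lemma abs_mult_power_le: "\<bar>(a::real) * b\<bar> ^ k \<le> \<bar>a\<bar> ^ (2 * k) + \<bar>b\<bar> ^ (2 * k)"
proof -
  have "0 \<le> \<bar>a\<bar> ^ k * \<bar>b\<bar> ^ k" by simp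
  then have "\<bar>a\<bar> ^ k * \<bar>b\<bar> ^ k \<le> (\<bar>a\<bar> ^ k)\<^sup>2 + (\<bar>b\<bar> ^ k)\<^sup>2"
    using sum_squares_bound[of "\<bar>a\<bar> ^ k" "\<bar>b\<bar> ^ k"] by linarith
  then show ?thesis by (simp only: abs_mult power_mult_distrib power_even_eq)
qed

lemma abs_add_power_le: "\<bar>(a::real) + b\<bar> ^ k \<le> 2 ^ k * (\<bar>a\<bar> ^ k + \<bar>b\<bar> ^ k)"
proof -
  have "\<bar>a + b\<bar> ^ k \<le> (2 * max \<bar>a\<bar> \<bar>b\<bar>) ^ k" by (intro power_mono) auto
  also have "\<dots> = 2 ^ k * max \<bar>a\<bar> \<bar>b\<bar> ^ k" by (simp add: power_mult_distrib)
  also have "max \<bar>a\<bar> \<bar>b\<bar> ^ k \<le> \<bar>a\<bar> ^ k + \<bar>b\<bar> ^ k" by (simp add: max_def)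
  finally show ?thesis by simp
qed

lemma finite_moments_integrable:
  assumes "finite_moments M f" shows "integrable M f"
proof -
  have "f \<in> borel_measurable M" "integrable M (\<lambda>x. \<bar>f x\<bar> ^ 1)"
    using assms unfolding finite_moments_def by blast+
  then show ?thesis by (simp add: integrable_abs_iff)
qed

lemma finite_moments_mult:
  assumes "finite_moments M f" "finite_moments M g"
  shows "finite_moments M (\<lambda>x. f x * g x)"
  unfolding finite_moments_def
proof (intro conjI allI)
  show m: "(\<lambda>x. f x * g x) \<in> borel_measurable M"
    using assms unfolding finite_moments_def by (intro borel_measurable_times) auto
  fix k
  have "integrable M (\<lambda>x. \<bar>f x\<bar> ^ (2 * k) + \<bar>g x\<bar> ^ (2 * k))"
    using assms by (auto simp: finite_moments_def)
  then show "integrable M (\<lambda>x. \<bar>f x * g x\<bar> ^ k)"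
    by (rule Bochner_Integration.integrable_bound) (use m abs_mult_power_le in auto)
qed

lemma finite_moments_add:
  assumes "finite_moments M f" "finite_moments M g"
  shows "finite_moments M (\<lambda>x. f x + g x)"
  unfolding finite_moments_def
proof (intro conjI allI)
  show m: "(\<lambda>x. f x + g x) \<in> borel_measurable M"
    using assms unfolding finite_moments_def by (intro borel_measurable_add) auto
  fix k
  have "integrable M (\<lambda>x. 2 ^ k * (\<bar>f x\<bar> ^ k + \<bar>g x\<bar> ^ k))"
    using assms by (auto simp: finite_moments_def)
  then show "integrable M (\<lambda>x. \<bar>f x + g x\<bar> ^ k)"
    by (rule Bochner_Integration.integrable_bound) (use m abs_add_power_le in auto)
qed

lemma finite_moments_cmult: "finite_moments M f \<Longrightarrow> finite_moments M (\<lambda>x. c * f x)"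
  unfolding finite_moments_def by (auto simp: abs_mult power_mult_distrib)

lemma finite_moments_divide: "finite_moments M f \<Longrightarrow> finite_moments M (\<lambda>x. f x / c)"
  using finite_moments_cmult[of M f "inverse c"] by (simp add: divide_inverse mult.commute)

lemma finite_moments_diff:
  "finite_moments M f \<Longrightarrow> finite_moments M g \<Longrightarrow> finite_moments M (\<lambda>x. f x - g x)"
  using finite_moments_add[of M f "\<lambda>x. (-1) * g x"] finite_moments_cmult[of M g "-1"] by simp

lemma (in finite_measure) finite_moments_const: "finite_moments M (\<lambda>_. c)"
  by (simp add: finite_moments_def)

lemma (in finite_measure) finite_moments_sum:
  "(\<And>i. i \<in> A \<Longrightarrow> finite_moments M (f i)) \<Longrightarrow> finite_moments M (\<lambda>x. \<Sum>i\<in>A. f i x)"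
  by (induction A rule: infinite_finite_induct) (auto intro: finite_moments_const finite_moments_add)

lemma (in finite_measure) finite_moments_power:
  "finite_moments M f \<Longrightarrow> finite_moments M (\<lambda>x. f x ^ k)"
  by (induction k) (auto intro: finite_moments_const finite_moments_mult)

lemma (in pair_sigma_finite)
  fixes f :: "'a \<Rightarrow> real" and g :: "'b \<Rightarrow> real"
  assumes f: "integrable M1 f" and g: "integrable M2 g"
  shows integrable_product_fst_snd: "integrable (M1 \<Otimes>\<^sub>M M2) (\<lambda>s. f (fst s) * g (snd s))"
    and integral_product_fst_snd:
      "(\<integral>s. f (fst s) * g (snd s) \<partial>(M1 \<Otimes>\<^sub>M M2)) = integral\<^sup>L M1 f * integral\<^sup>L M2 g"
proof -
  have [measurable]: "f \<in> borel_measurable M1" "g \<in> borel_measurable M2" using f g by simp_all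
  have "(\<integral>\<^sup>+s. ennreal (norm (f (fst s) * g (snd s))) \<partial>(M1 \<Otimes>\<^sub>M M2))
      = (\<integral>\<^sup>+x. \<integral>\<^sup>+y. ennreal \<bar>f x\<bar> * ennreal \<bar>g y\<bar> \<partial>M2 \<partial>M1)"
    by (subst M2.nn_integral_fst[symmetric]) (auto simp: abs_mult ennreal_mult)
  also have "\<dots> = (\<integral>\<^sup>+x. ennreal \<bar>f x\<bar> \<partial>M1) * (\<integral>\<^sup>+y. ennreal \<bar>g y\<bar> \<partial>M2)"
    by (simp add: nn_integral_cmult nn_integral_multc)
  also have "\<dots> < \<infinity>"
    using f g by (simp add: integrable_iff_bounded ennreal_mult_less_top)
  finally show int: "integrable (M1 \<Otimes>\<^sub>M M2) (\<lambda>s. f (fst s) * g (snd s))"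
    by (intro integrableI_bounded) measurable
  show "(\<integral>s. f (fst s) * g (snd s) \<partial>(M1 \<Otimes>\<^sub>M M2)) = integral\<^sup>L M1 f * integral\<^sup>L M2 g"
    using integral_fst'[OF int] by simp
qed

lemma (in pair_sigma_finite) finite_moments_product_fst_snd:
  assumes f: "finite_moments M1 f" and g: "finite_moments M2 g"
  shows "finite_moments (M1 \<Otimes>\<^sub>M M2) (\<lambda>s. f (fst s) * g (snd s))"
  unfolding finite_moments_def
proof (intro conjI allI)
  show "(\<lambda>s. f (fst s) * g (snd s)) \<in> borel_measurable (M1 \<Otimes>\<^sub>M M2)"
    using f g unfolding finite_moments_def by (intro borel_measurable_times) auto
  fix k
  show "integrable (M1 \<Otimes>\<^sub>M M2) (\<lambda>s. \<bar>f (fst s) * g (snd s)\<bar> ^ k)"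
    using integrable_product_fst_snd[of "\<lambda>x. \<bar>f x\<bar> ^ k" "\<lambda>y. \<bar>g y\<bar> ^ k"] f g
    by (simp add: finite_moments_def abs_mult power_mult_distrib)
qed

lemma (in pair_sigma_finite) integral_sum_product_fst_snd:
  fixes F :: "'i \<Rightarrow> 'a \<Rightarrow> real" and G :: "'i \<Rightarrow> 'b \<Rightarrow> real"
  assumes "\<And>y. y \<in> A \<Longrightarrow> integrable M1 (F y)" and "\<And>y. y \<in> A \<Longrightarrow> integrable M2 (G y)"
  shows "(\<integral>s. (\<Sum>y\<in>A. F y (fst s) * G y (snd s)) \<partial>(M1 \<Otimes>\<^sub>M M2)) =
    (\<Sum>y\<in>A. integral\<^sup>L M1 (F y) * integral\<^sup>L M2 (G y))"
proof -
  have "(\<integral>s. (\<Sum>y\<in>A. F y (fst s) * G y (snd s)) \<partial>(M1 \<Otimes>\<^sub>M M2))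
      = (\<Sum>y\<in>A. \<integral>s. F y (fst s) * G y (snd s) \<partial>(M1 \<Otimes>\<^sub>M M2))"
    by (intro Bochner_Integration.integral_sum integrable_product_fst_snd assms)
  also have "\<dots> = (\<Sum>y\<in>A. integral\<^sup>L M1 (F y) * integral\<^sup>L M2 (G y))"
    by (intro sum.cong refl integral_product_fst_snd assms)
  finally show ?thesis .
qed

section \<open>Independent standard Gaussian coordinates\<close>

lemma prod_list_map_eq_prod_count:
  assumes "finite X" "set xs \<subseteq> X"
  shows "prod_list (map f xs) = (\<Prod>x\<in>X. (f x :: 'a :: comm_monoid_mult) ^ count_list xs x)"
  using assms(2)
proof (induction xs)
  case (Cons y xs)
  have "(\<Prod>x\<in>X. f x ^ count_list (y # xs) x)
      = (\<Prod>x\<in>X. (if y = x then f x else 1) * f x ^ count_list xs x)"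
    by (intro prod.cong) auto
  also have "\<dots> = f y * (\<Prod>x\<in>X. f x ^ count_list xs x)"
    using Cons.prems assms(1) by (simp add: prod.distrib prod.delta)
  finally show ?case using Cons by simp
qed simp

lemma prob_space_std_gauss: "prob_space std_gauss"
  unfolding std_gauss_def by (rule prob_space_normal_density) simp

lemma has_bochner_integral_std_gauss:
  assumes "has_bochner_integral lborel (\<lambda>x. std_normal_density x * f x) v"
    and "f \<in> borel_measurable lborel"
  shows "has_bochner_integral std_gauss f v"
  unfolding std_gauss_def
  by (rule has_bochner_integral_density) (use assms normal_density_nonneg in simp_all)

lemma integrable_std_gauss_abs_power: "integrable std_gauss (\<lambda>x. \<bar>x\<bar> ^ k)"
proof (cases "even k")
  case True
  then obtain m where "k = 2 * m" by (rule evenE)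
  then show ?thesis
    using has_bochner_integral_std_gauss[OF std_normal_moment_even[of m]]
    by (simp add: has_bochner_integral_iff power_even_abs)
next
  case False
  then obtain m where "k = 2 * m + 1" by (rule oddE)
  then show ?thesis
    using has_bochner_integral_std_gauss[OF std_normal_moment_abs_odd[of m]]
    by (simp add: has_bochner_integral_iff)
qed

lemma integrable_std_gauss_power: "integrable std_gauss (\<lambda>x. x ^ k)"
  using integrable_std_gauss_abs_power[of k]
  by (subst integrable_abs_iff[symmetric]) (simp_all add: power_abs std_gauss_def)

definition gauss_moment :: "nat \<Rightarrow> real" where
  "gauss_moment k = (\<integral>x. x ^ k \<partial>std_gauss)"

lemma gauss_moment_small:
  "gauss_moment 0 = 1" "gauss_moment 1 = 0" "gauss_moment 2 = 1"
  "gauss_moment 3 = 0" "gauss_moment 4 = 3"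
proof -
  have even: "gauss_moment (2 * k) = fact (2 * k) / (2 ^ k * fact k)" for k
    using has_bochner_integral_std_gauss[OF std_normal_moment_even[of k]]
    by (simp add: gauss_moment_def has_bochner_integral_iff)
  have odd: "gauss_moment (2 * k + 1) = 0" for k
    using has_bochner_integral_std_gauss[OF std_normal_moment_odd[of k]]
    by (simp add: gauss_moment_def has_bochner_integral_iff)
  show "gauss_moment 0 = 1" using even[of 0] by simp
  show "gauss_moment 1 = 0" using odd[of 0] by simp
  show "gauss_moment 2 = 1" using even[of 1] by simp
  show "gauss_moment 3 = 0" using odd[of 1] by simp
  show "gauss_moment 4 = 3" using even[of 2] by (simp add: fact_numeral)
qed

text \<open>The same values with unary arguments, as produced by evaluating \<open>count_list\<close>.\<close>
lemmas gauss_moment_small_Suc = gauss_moment_small[unfolded eval_nat_numeral BitM.simps One_nat_def]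

abbreviation iid_gauss :: "'i set \<Rightarrow> ('i \<Rightarrow> real) measure" where
  "iid_gauss K \<equiv> PiM K (\<lambda>_. std_gauss)"

lemma prob_space_iid_gauss: "prob_space (iid_gauss K)"
  by (intro prob_space_PiM prob_space_std_gauss)

lemma product_sigma_finite_std_gauss: "product_sigma_finite (\<lambda>_. std_gauss)"
  unfolding product_sigma_finite_def
  using prob_space_imp_sigma_finite[OF prob_space_std_gauss] by simp

lemma finite_moments_iid_gauss_coord:
  assumes K: "finite K" and i: "i \<in> K"
  shows "finite_moments (iid_gauss K) (\<lambda>x. x i)"
  unfolding finite_moments_def
proof (intro conjI allI)
  show "(\<lambda>x. x i) \<in> borel_measurable (iid_gauss K)"
    using i unfolding std_gauss_def by measurable
  fix k
  have "integrable std_gauss (\<lambda>t. if j = i then \<bar>t\<bar> ^ k else 1)" for j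
    by (cases "j = i") (simp_all add: integrable_std_gauss_abs_power
        finite_measure.integrable_const[OF prob_space.finite_measure[OF prob_space_std_gauss]])
  then have "integrable (iid_gauss K) (\<lambda>x. \<Prod>j\<in>K. (\<lambda>t. if j = i then \<bar>t\<bar> ^ k else 1) (x j))"
    by (intro product_sigma_finite.product_integrable_prod[OF product_sigma_finite_std_gauss K])
  then show "integrable (iid_gauss K) (\<lambda>x. \<bar>x i\<bar> ^ k)"
    using K i by (simp add: prod.delta)
qed

lemma integral_iid_gauss_prod_list:
  assumes K: "finite K" "set ps \<subseteq> K"
  shows "(\<integral>x. prod_list (map x ps) \<partial>iid_gauss K) = (\<Prod>i\<in>set ps. gauss_moment (count_list ps i))"
proof -
  have "(\<integral>x. prod_list (map x ps) \<partial>iid_gauss K) = (\<integral>x. (\<Prod>i\<in>K. x i ^ count_list ps i) \<partial>iid_gauss K)"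
    by (simp add: prod_list_map_eq_prod_count[OF K])
  also have "\<dots> = (\<Prod>i\<in>K. gauss_moment (count_list ps i))"
    by (subst product_sigma_finite.product_integral_prod[OF product_sigma_finite_std_gauss K(1)])
       (simp_all add: integrable_std_gauss_power gauss_moment_def)
  also have "\<dots> = (\<Prod>i\<in>set ps. gauss_moment (count_list ps i))"
    by (rule prod.mono_neutral_right) (use K in \<open>auto simp: gauss_moment_small count_list_0_iff\<close>)
  finally show ?thesis .
qed

context
  fixes K :: "'i set"
  assumes K: "finite K"
begin

lemma integral_iid_gauss_coord: "a \<in> K \<Longrightarrow> (\<integral>x. x a \<partial>iid_gauss K) = 0"
  using integral_iid_gauss_prod_list[OF K, of "[a]"] by (simp add: gauss_moment_small_Suc)

lemma integral_iid_gauss_coord2: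
  "a \<in> K \<Longrightarrow> b \<in> K \<Longrightarrow> (\<integral>x. x a * x b \<partial>iid_gauss K) = of_bool (a = b)"
  using integral_iid_gauss_prod_list[OF K, of "[a, b]"]
  by (cases "a = b") (simp_all add: gauss_moment_small_Suc)

lemma integral_iid_gauss_coord3:
  "a \<in> K \<Longrightarrow> b \<in> K \<Longrightarrow> c \<in> K \<Longrightarrow> (\<integral>x. x a * x b * x c \<partial>iid_gauss K) = 0"
  using integral_iid_gauss_prod_list[OF K, of "[a, b, c]"]
  by (cases "a = b"; cases "a = c"; cases "b = c")
     (simp_all add: gauss_moment_small_Suc mult.assoc insert_commute)

lemma integral_iid_gauss_coord4:
  assumes "a \<in> K" "b \<in> K" "c \<in> K" "e \<in> K"
  shows "(\<integral>x. x a * x b * x c * x e \<partial>iid_gauss K) =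
    of_bool (a = b \<and> c = e) + of_bool (a = c \<and> b = e) + of_bool (a = e \<and> b = c)"
  using integral_iid_gauss_prod_list[OF K, of "[a, b, c, e]"] assms
  by (cases "a = b"; cases "a = c"; cases "a = e"; cases "b = c"; cases "b = e"; cases "c = e")
     (simp_all add: gauss_moment_small_Suc mult.assoc insert_commute)

end

interpretation iid_gauss: finite_measure "iid_gauss K" for K
  using prob_space_iid_gauss by (rule prob_space.finite_measure)

lemma pair_sigma_finite_iid_gauss: "pair_sigma_finite (iid_gauss I) (iid_gauss J)"
  by (intro pair_sigma_finite.intro prob_space_imp_sigma_finite prob_space_iid_gauss)

lemma emeasure_std_gauss_ball_pos:
  assumes "e > 0" shows "emeasure std_gauss (ball x e) > 0"
proof -
  let ?f = "\<lambda>y. ennreal (std_normal_density y) * indicator (ball x e) y"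
  have [measurable]: "ball x e \<in> sets borel" by simp
  have "emeasure std_gauss (ball x e) = (\<integral>\<^sup>+y. ?f y \<partial>lborel)"
    unfolding std_gauss_def by (rule emeasure_density) auto
  moreover have "(\<integral>\<^sup>+y. ?f y \<partial>lborel) \<noteq> 0"
  proof
    assume "(\<integral>\<^sup>+y. ?f y \<partial>lborel) = 0"
    then have "AE y in lborel. ?f y = 0"
      by (subst (asm) nn_integral_0_iff_AE) measurable
    moreover have "std_normal_density y \<noteq> 0" for y
      using normal_density_pos[of 1 0 y] by auto
    ultimately have "AE y in lborel. y \<notin> ball x e"
      by (auto elim!: eventually_mono simp: indicator_def split: if_splits)
    then have "emeasure lborel (ball x e) = 0"
      by (subst AE_iff_measurable[symmetric, where P = "\<lambda>y. y \<notin> ball x e"]) auto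
    with assms show False by (simp add: ball_eq_greaterThanLessThan)
  qed
  ultimately show ?thesis by (simp add: zero_less_iff_neq_zero)
qed

lemma emeasure_iid_gauss_box_pos:
  assumes "finite I" "\<And>i. e i > 0"
  shows "emeasure (iid_gauss I) (\<Pi>\<^sub>E i\<in>I. ball (x i) (e i)) > 0"
proof -
  have "emeasure (iid_gauss I) (\<Pi>\<^sub>E i\<in>I. ball (x i) (e i))
      = (\<Prod>i\<in>I. emeasure std_gauss (ball (x i) (e i)))"
    by (rule product_sigma_finite.emeasure_PiM[OF product_sigma_finite_std_gauss assms(1)])
       (simp add: std_gauss_def)
  then show ?thesis
    using emeasure_std_gauss_ball_pos[OF assms(2)]
    by (simp add: zero_less_iff_neq_zero ennreal_prod_eq_0)
qed

lemma open_fun_contains_box: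
  fixes A :: "('i \<Rightarrow> 'a::metric_space) set"
  assumes "open A" "x \<in> A"
  obtains e where "\<And>i. e i > 0" "\<And>y. (\<And>i. y i \<in> ball (x i) (e i)) \<Longrightarrow> y \<in> A"
proof -
  have "openin (product_topology (\<lambda>_. euclidean) UNIV) A"
    using assms(1) unfolding open_fun_def .
  then obtain X where
    X: "x \<in> (\<Pi>\<^sub>E i\<in>UNIV. X i)" "\<And>i. openin euclidean (X i)" "(\<Pi>\<^sub>E i\<in>UNIV. X i) \<subseteq> A"
    using product_topology_open_contains_basis[OF _ assms(2)] by blast
  have "\<exists>e>0. ball (x i) e \<subseteq> X i" for i
    using X(1) X(2)[of i] by (auto simp: open_contains_ball simp flip: open_openin)
  then obtain e where e: "\<And>i. e i > 0" "\<And>i. ball (x i) (e i) \<subseteq> X i" by metis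
  show ?thesis
  proof (rule that[OF e(1)])
    fix y assume "\<And>i. y i \<in> ball (x i) (e i)"
    then have "y \<in> (\<Pi>\<^sub>E i\<in>UNIV. X i)" using e(2) by blast
    then show "y \<in> A" using X(3) by blast
  qed
qed

text \<open>The product measures only see the coordinates in \<open>I\<close> and \<open>J\<close>, hence the locality
  hypothesis. Where \<open>F\<close> is nonzero it stays nonzero on a product of balls in these coordinates,
  which has positive measure.\<close>
lemma AE_iid_gauss_pair_zero_imp_zero:
  fixes F :: "('i \<Rightarrow> real) \<times> ('j \<Rightarrow> real) \<Rightarrow> real"
  assumes I: "finite I" and J: "finite J" and cont: "continuous_on UNIV F"
    and local: "\<And>f f' g g'. (\<And>i. i \<in> I \<Longrightarrow> f i = f' i) \<Longrightarrow> (\<And>j. j \<in> J \<Longrightarrow> g j = g' j) \<Longrightarrow>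
      F (f, g) = F (f', g')"
    and AE: "AE s in iid_gauss I \<Otimes>\<^sub>M iid_gauss J. F s = 0"
  shows "F (f0, g0) = 0"
proof (rule ccontr)
  let ?M = "iid_gauss I \<Otimes>\<^sub>M iid_gauss J"
  assume "F (f0, g0) \<noteq> 0"
  then have "open (F -` (- {0}))" "(f0, g0) \<in> F -` (- {0})"
    using cont by (auto intro: open_vimage)
  then obtain A B where AB: "open A" "open B" "f0 \<in> A" "g0 \<in> B" "A \<times> B \<subseteq> F -` (- {0})"
    by (auto elim!: open_prod_elim)
  obtain eA where eA: "\<And>i. eA i > 0" "\<And>f. (\<And>i. f i \<in> ball (f0 i) (eA i)) \<Longrightarrow> f \<in> A"
    using open_fun_contains_box[OF AB(1,3)] by blast
  obtain eB where eB: "\<And>j. eB j > 0" "\<And>g. (\<And>j. g j \<in> ball (g0 j) (eB j)) \<Longrightarrow> g \<in> B"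
    using open_fun_contains_box[OF AB(2,4)] by blast
  define BA where "BA = (\<Pi>\<^sub>E i\<in>I. ball (f0 i) (eA i))"
  define BB where "BB = (\<Pi>\<^sub>E j\<in>J. ball (g0 j) (eB j))"
  have "F (f, g) \<noteq> 0" if "f \<in> BA" "g \<in> BB" for f g
  proof -
    have "(\<lambda>i. if i \<in> I then f i else f0 i) \<in> A" "(\<lambda>j. if j \<in> J then g j else g0 j) \<in> B"
      using that eA eB by (auto intro!: eA(2) eB(2) simp: BA_def BB_def)
    then have "F (\<lambda>i. if i \<in> I then f i else f0 i, \<lambda>j. if j \<in> J then g j else g0 j) \<noteq> 0"
      using AB(5) by auto
    then show ?thesis by (subst local) auto
  qed
  then have "BA \<times> BB \<subseteq> {s \<in> space ?M. F s \<noteq> 0}"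
    by (auto simp: space_pair_measure space_PiM std_gauss_def BA_def BB_def)
  moreover have "BA \<in> sets (iid_gauss I)" "BB \<in> sets (iid_gauss J)"
    unfolding BA_def BB_def by (auto intro!: sets_PiM_I_finite I J simp: std_gauss_def)
  ultimately have "emeasure ?M (BA \<times> BB) = 0"
    using AE by (auto elim!: AE_E intro: emeasure_eq_0)
  moreover have "emeasure ?M (BA \<times> BB) = emeasure (iid_gauss I) BA * emeasure (iid_gauss J) BB"
    using \<open>BA \<in> sets (iid_gauss I)\<close> \<open>BB \<in> sets (iid_gauss J)\<close>
    by (intro sigma_finite_measure.emeasure_pair_measure_Times prob_space_imp_sigma_finite
        prob_space_iid_gauss)
  moreover have "emeasure (iid_gauss I) BA > 0" "emeasure (iid_gauss J) BB > 0"
    unfolding BA_def BB_def using eA(1) eB(1) by (auto intro!: emeasure_iid_gauss_box_pos I J)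
  ultimately show False by auto
qed

lemma continuous_on_fst_coord [continuous_intros]:
  "continuous_on UNIV (\<lambda>s :: ('i \<Rightarrow> 'a::topological_space) \<times> 'b::topological_space. fst s i)"
  by (rule continuous_on_compose2[OF continuous_on_product_coordinates
        continuous_on_fst[OF continuous_on_id]]) auto

lemma continuous_on_snd_coord [continuous_intros]:
  "continuous_on UNIV (\<lambda>s :: 'b::topological_space \<times> ('i \<Rightarrow> 'a::topological_space). snd s i)"
  by (rule continuous_on_compose2[OF continuous_on_product_coordinates
        continuous_on_snd[OF continuous_on_id]]) auto

section \<open>The prediction in coordinates\<close>

lemma lsa_pred_eq:
  assumes Z: "Z \<in> carrier_mat m (n + 1)" and V: "V \<in> carrier_mat m m" and W: "W \<in> carrier_mat m m"
  shows "lsa_pred n Z V W =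
    col Z n + (1 / real n) \<cdot>\<^sub>v (V *\<^sub>v (Z *\<^sub>v (transpose_mat Z *\<^sub>v (W *\<^sub>v col Z n))))"
proof -
  have "col (V * Z * (transpose_mat Z * W * Z)) n = (V * Z) *\<^sub>v col (transpose_mat Z * W * Z) n"
    using Z V W by (intro col_mult2) auto
  also have "col (transpose_mat Z * W * Z) n = (transpose_mat Z * W) *\<^sub>v col Z n"
    using Z W by (intro col_mult2) auto
  also have "\<dots> = transpose_mat Z *\<^sub>v (W *\<^sub>v col Z n)"
    using Z W by (intro assoc_mult_mat_vec) auto
  also have "(V * Z) *\<^sub>v \<dots> = V *\<^sub>v (Z *\<^sub>v (transpose_mat Z *\<^sub>v (W *\<^sub>v col Z n)))"
    using Z V by (intro assoc_mult_mat_vec) (auto intro!: carrier_vecI)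
  moreover have "V * Z * (transpose_mat Z * W * Z) \<in> carrier_mat m (n + 1)"
    using Z V W by auto
  ultimately show ?thesis
    unfolding lsa_pred_def f_LSA_def using Z by (simp del: assoc_mult_mat)
qed

text \<open>The data enter through their sampled coordinates \<open>x (i, j) = X\<^sub>i\<^sub>j\<close> and \<open>w i = w*\<^sub>i\<close>;
  \<open>label\<close> is \<open>y\<close> and \<open>attn_score d W x w j\<close> is \<open>z\<^sub>j\<^sup>T W z\<^sub>n\<^sub>+\<^sub>1\<close> for the columns \<open>z\<^sub>j\<close> of \<open>Z\<^sub>0\<close>.\<close>
definition label :: "nat \<Rightarrow> (nat \<times> nat \<Rightarrow> real) \<Rightarrow> (nat \<Rightarrow> real) \<Rightarrow> nat \<Rightarrow> real" where
  "label d x w j = (\<Sum>i<d. w i * x (i, j))"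

definition attn_score :: "nat \<Rightarrow> real mat \<Rightarrow> (nat \<times> nat \<Rightarrow> real) \<Rightarrow> (nat \<Rightarrow> real) \<Rightarrow> nat \<Rightarrow> real" where
  "attn_score d W x w j = (\<Sum>i<d. x (i, j) * W $$ (i, 2 * d + 1)) + label d x w j * W $$ (d, 2 * d + 1)"

definition lsa_update ::
  "nat \<Rightarrow> nat \<Rightarrow> real mat \<Rightarrow> real mat \<Rightarrow> (nat \<times> nat \<Rightarrow> real) \<Rightarrow> (nat \<Rightarrow> real) \<Rightarrow> nat \<Rightarrow> real" where
  "lsa_update d n V W x w r =
     (\<Sum>k<d. V $$ (r, k) * (\<Sum>j<n. x (k, j) * attn_score d W x w j))
     + V $$ (r, d) * (\<Sum>j<n. label d x w j * attn_score d W x w j)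
     + V $$ (r, 2 * d + 1) * W $$ (2 * d + 1, 2 * d + 1)"

lemma sum_lessThan_de_split:
  fixes d :: nat
  shows "(\<Sum>k<2 * d + 2. a k) = (\<Sum>k<d. a k) + a d + (\<Sum>k\<in>{d<..2 * d}. a k) + a (2 * d + 1)"
proof -
  have "{..<2 * d + 2} = {..<d} \<union> {d} \<union> {d<..2 * d} \<union> {2 * d + 1}" by auto
  moreover have "sum a ({..<d} \<union> {d<..2 * d}) = sum a {..<d} + sum a {d<..2 * d}"
    by (rule sum.union_disjoint) auto
  ultimately show ?thesis by (simp add: ac_simps)
qed

lemma labels_X_of: "j < n \<Longrightarrow> labels (X_of d n x) (w_of d w) $ j = label d x w j"
  by (simp add: labels_def label_def X_of_def w_of_def scalar_prod_def atLeast0LessThan)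

lemma w_of_index: "i < d \<Longrightarrow> w_of d w $ i = w i"
  by (simp add: w_of_def)

lemma Z_in_index:
  assumes "i < 2 * d + 2" "j < n + 1"
  shows "Z_in (X_of d n x) (w_of d w) (0\<^sub>v d) $$ (i, j) =
    (if j < n then (if i < d then x (i, j) else if i = d then label d x w j else 0)
     else if i = 2 * d + 1 then 1 else 0)"
proof -
  have X: "dim_row (X_of d n x) = d" "dim_col (X_of d n x) = n"
    "i < d \<Longrightarrow> j < n \<Longrightarrow> X_of d n x $$ (i, j) = x (i, j)"
    by (simp_all add: X_of_def)
  show ?thesis
    using assms unfolding Z_in_def Let_def X(1,2) by (simp add: X(3) labels_X_of)
qed

lemma dim_Z_in:
  "dim_row (Z_in (X_of d n x) (w_of d w) (0\<^sub>v d)) = 2 * d + 2"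
  "dim_col (Z_in (X_of d n x) (w_of d w) (0\<^sub>v d)) = n + 1"
  by (simp_all add: Z_in_def X_of_def Let_def)

lemma Z_in_mult_vec_index:
  assumes "q \<in> carrier_vec (n + 1)" "k < 2 * d + 2"
  shows "(Z_in (X_of d n x) (w_of d w) (0\<^sub>v d) *\<^sub>v q) $ k =
    (if k < d then \<Sum>j<n. x (k, j) * q $ j
     else if k = d then \<Sum>j<n. label d x w j * q $ j
     else if k = 2 * d + 1 then q $ n else 0)"
proof -
  let ?Z = "Z_in (X_of d n x) (w_of d w) (0\<^sub>v d)"
  have "(?Z *\<^sub>v q) $ k = (\<Sum>j<n. ?Z $$ (k, j) * q $ j) + ?Z $$ (k, n) * q $ n"
    using assms by (simp add: dim_Z_in scalar_prod_def atLeast0LessThan)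
  moreover have "(\<Sum>j<n. ?Z $$ (k, j) * q $ j) = (if k < d then \<Sum>j<n. x (k, j) * q $ j
      else if k = d then \<Sum>j<n. label d x w j * q $ j else 0)"
    using assms(2) by (auto simp: Z_in_index intro!: sum.cong sum.neutral)
  ultimately show ?thesis
    using assms(2) by (simp add: Z_in_index)
qed

lemma transpose_Z_in_mult_vec_index:
  assumes "u \<in> carrier_vec (2 * d + 2)" "j < n + 1"
  shows "(transpose_mat (Z_in (X_of d n x) (w_of d w) (0\<^sub>v d)) *\<^sub>v u) $ j =
    (if j < n then (\<Sum>i<d. x (i, j) * u $ i) + label d x w j * u $ d else u $ (2 * d + 1))"
proof -
  let ?Z = "Z_in (X_of d n x) (w_of d w) (0\<^sub>v d)"
  have "(transpose_mat ?Z *\<^sub>v u) $ j = (\<Sum>i<2 * d + 2. ?Z $$ (i, j) * u $ i)"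
    using assms by (simp add: dim_Z_in scalar_prod_def atLeast0LessThan)
  also have "\<dots> = (\<Sum>i<d. ?Z $$ (i, j) * u $ i) + ?Z $$ (d, j) * u $ d
      + (\<Sum>i\<in>{d<..2 * d}. ?Z $$ (i, j) * u $ i) + ?Z $$ (2 * d + 1, j) * u $ (2 * d + 1)"
    by (rule sum_lessThan_de_split)
  also have "(\<Sum>i<d. ?Z $$ (i, j) * u $ i) = (if j < n then \<Sum>i<d. x (i, j) * u $ i else 0)"
    using assms(2) by (auto simp: Z_in_index intro!: sum.cong sum.neutral)
  also have "(\<Sum>i\<in>{d<..2 * d}. ?Z $$ (i, j) * u $ i) = 0"
    using assms(2) by (intro sum.neutral) (auto simp: Z_in_index)
  finally show ?thesis
    using assms(2) by (simp add: Z_in_index)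
qed

lemma lsa_pred_coords:
  assumes V: "V \<in> carrier_mat (2 * d + 2) (2 * d + 2)" and W: "W \<in> carrier_mat (2 * d + 2) (2 * d + 2)"
  shows "lsa_pred n (Z_in (X_of d n x) (w_of d w) (0\<^sub>v d)) V W =
    vec (2 * d + 2) (\<lambda>r. (if r = 2 * d + 1 then 1 else 0) + lsa_update d n V W x w r / real n)"
proof -
  let ?Z = "Z_in (X_of d n x) (w_of d w) (0\<^sub>v d)"
  have Z: "?Z \<in> carrier_mat (2 * d + 2) (n + 1)" by (simp add: carrier_matI dim_Z_in)
  define u where "u = col W (2 * d + 1)"
  define q where "q = transpose_mat ?Z *\<^sub>v u"
  define h where "h = ?Z *\<^sub>v q"
  have u: "u \<in> carrier_vec (2 * d + 2)" "\<And>i. i < 2 * d + 2 \<Longrightarrow> u $ i = W $$ (i, 2 * d + 1)"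
    using W by (auto simp: u_def carrier_vecI)
  have e: "col ?Z n = vec (2 * d + 2) (\<lambda>i. if i = 2 * d + 1 then 1 else 0)"
    by (rule eq_vecI) (simp_all add: dim_Z_in Z_in_index)
  have We: "W *\<^sub>v vec (2 * d + 2) (\<lambda>i. if i = 2 * d + 1 then 1 else 0) = u"
    by (rule eq_vecI) (use W in \<open>simp_all add: u_def scalar_prod_def atLeast0LessThan\<close>)
  have q: "q \<in> carrier_vec (n + 1)" "\<And>j. j < n \<Longrightarrow> q $ j = attn_score d W x w j"
    "q $ n = W $$ (2 * d + 1, 2 * d + 1)"
    using transpose_Z_in_mult_vec_index[OF u(1), of _ n x w] u(2)
    by (auto simp: q_def dim_Z_in attn_score_def carrier_vecI)
  have Vh: "V *\<^sub>v h = vec (2 * d + 2) (lsa_update d n V W x w)"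
  proof (rule eq_vecI)
    fix r assume "r < dim_vec (vec (2 * d + 2) (lsa_update d n V W x w))"
    then have r: "r < 2 * d + 2" by simp
    have h: "h $ k = (if k < d then \<Sum>j<n. x (k, j) * attn_score d W x w j
        else if k = d then \<Sum>j<n. label d x w j * attn_score d W x w j
        else if k = 2 * d + 1 then W $$ (2 * d + 1, 2 * d + 1) else 0)" if "k < 2 * d + 2" for k
      unfolding h_def Z_in_mult_vec_index[OF q(1) that] using q(2,3) by (auto intro!: sum.cong)
    have "(V *\<^sub>v h) $ r = (\<Sum>k<2 * d + 2. V $$ (r, k) * h $ k)"
      using V r by (simp add: scalar_prod_def h_def dim_Z_in atLeast0LessThan)
    also have "\<dots> = lsa_update d n V W x w r"
      unfolding sum_lessThan_de_split lsa_update_def by (simp add: h sum.neutral)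
    finally show "(V *\<^sub>v h) $ r = vec (2 * d + 2) (lsa_update d n V W x w) $ r"
      using r by simp
  qed (use V in simp)
  show ?thesis
    unfolding lsa_pred_eq[OF Z V W] e We q_def[symmetric] h_def[symmetric] Vh by (intro eq_vecI) auto
qed

definition gram :: "nat \<Rightarrow> (nat \<times> nat \<Rightarrow> real) \<Rightarrow> nat \<Rightarrow> nat \<Rightarrow> real" where
  "gram n x a b = (\<Sum>j<n. x (a, j) * x (b, j))"

definition corr :: "nat \<Rightarrow> nat \<Rightarrow> (nat \<times> nat \<Rightarrow> real) \<Rightarrow> (nat \<Rightarrow> real) \<Rightarrow> nat \<Rightarrow> real" where
  "corr d n x w k = (\<Sum>j<n. x (k, j) * label d x w j)"

lemma corr_eq_gram: "corr d n x w k = (\<Sum>p<d. gram n x k p * w p)"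
  unfolding corr_def gram_def label_def
  by (simp add: sum_distrib_left sum_distrib_right mult_ac sum.swap[of _ "{..<n}"])

lemma lsa_update_eq_gram:
  "lsa_update d n V W x w r =
     (\<Sum>k<d. V $$ (r, k) * ((\<Sum>i<d. W $$ (i, 2 * d + 1) * gram n x k i) + W $$ (d, 2 * d + 1) * corr d n x w k))
     + V $$ (r, d) * ((\<Sum>i<d. W $$ (i, 2 * d + 1) * corr d n x w i)
                      + W $$ (d, 2 * d + 1) * (\<Sum>a<d. \<Sum>b<d. gram n x a b * (w a * w b)))
     + V $$ (r, 2 * d + 1) * W $$ (2 * d + 1, 2 * d + 1)"
proof -
  have "(\<Sum>j<n. x (k, j) * attn_score d W x w j)
      = (\<Sum>i<d. W $$ (i, 2 * d + 1) * gram n x k i) + W $$ (d, 2 * d + 1) * corr d n x w k" for k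
    unfolding attn_score_def gram_def corr_def
    by (simp add: distrib_left sum.distrib sum_distrib_left mult_ac sum.swap[of _ "{..<n}"])
  moreover have "(\<Sum>j<n. label d x w j * attn_score d W x w j)
      = (\<Sum>i<d. W $$ (i, 2 * d + 1) * corr d n x w i)
        + W $$ (d, 2 * d + 1) * (\<Sum>a<d. \<Sum>b<d. gram n x a b * (w a * w b))"
    unfolding attn_score_def gram_def corr_def label_def
    by (simp add: distrib_left sum.distrib sum_distrib_left sum_distrib_right mult_ac sum.swap[of _ "{..<n}"])
  ultimately show ?thesis by (simp add: lsa_update_def)
qed

lemma corr_eq_mult_labels:
  assumes "m < d"
  shows "corr d n x w m = (X_of d n x *\<^sub>v labels (X_of d n x) (w_of d w)) $ m"
proof -
  have "(X_of d n x *\<^sub>v labels (X_of d n x) (w_of d w)) $ m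
      = (\<Sum>j<n. x (m, j) * labels (X_of d n x) (w_of d w) $ j)"
    using assms by (simp add: X_of_def labels_def scalar_prod_def atLeast0LessThan)
  then show ?thesis
    by (auto simp: corr_def labels_X_of intro!: sum.cong)
qed

section \<open>Moments of the data\<close>

lemma prob_space_data_measure: "prob_space (data_measure d n)"
  unfolding data_measure_def by (intro prob_space_pair prob_space_iid_gauss)

interpretation data_measure: finite_measure "data_measure d n" for d n
  using prob_space_data_measure by (rule prob_space.finite_measure)

lemma finite_moments_data_product:
  "finite_moments (iid_gauss ({..<d} \<times> {..<n})) F \<Longrightarrow> finite_moments (iid_gauss {..<d}) G \<Longrightarrow>
    finite_moments (data_measure d n) (\<lambda>s. F (fst s) * G (snd s))"
  unfolding data_measure_def
  by (rule pair_sigma_finite.finite_moments_product_fst_snd[OF pair_sigma_finite_iid_gauss])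

lemma finite_moments_data_fst:
  "finite_moments (iid_gauss ({..<d} \<times> {..<n})) F \<Longrightarrow> finite_moments (data_measure d n) (\<lambda>s. F (fst s))"
  using finite_moments_data_product[of d n F "\<lambda>_. 1"]
  by (simp add: iid_gauss.finite_moments_const)

lemma finite_moments_data_snd:
  "finite_moments (iid_gauss {..<d}) G \<Longrightarrow> finite_moments (data_measure d n) (\<lambda>s. G (snd s))"
  using finite_moments_data_product[of d n "\<lambda>_. 1" G]
  by (simp add: iid_gauss.finite_moments_const)

lemma integral_data_sum_product:
  assumes "\<And>y. y \<in> A \<Longrightarrow> finite_moments (iid_gauss ({..<d} \<times> {..<n})) (F y)"
    and "\<And>y. y \<in> A \<Longrightarrow> finite_moments (iid_gauss {..<d}) (G y)"
  shows "(\<integral>s. (\<Sum>y\<in>A. F y (fst s) * G y (snd s)) \<partial>data_measure d n) =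
    (\<Sum>y\<in>A. (\<integral>x. F y x \<partial>iid_gauss ({..<d} \<times> {..<n})) * (\<integral>w. G y w \<partial>iid_gauss {..<d}))"
  unfolding data_measure_def using assms
  by (intro pair_sigma_finite.integral_sum_product_fst_snd[OF pair_sigma_finite_iid_gauss]
      finite_moments_integrable)

lemma finite_moments_gram:
  "a < d \<Longrightarrow> b < d \<Longrightarrow> finite_moments (iid_gauss ({..<d} \<times> {..<n})) (\<lambda>x. gram n x a b)"
  unfolding gram_def
  by (intro iid_gauss.finite_moments_sum finite_moments_mult
      finite_moments_iid_gauss_coord) auto

lemma finite_moments_data_gram:
  "a < d \<Longrightarrow> b < d \<Longrightarrow> finite_moments (data_measure d n) (\<lambda>s. gram n (fst s) a b)"
  using finite_moments_data_fst[of d n "\<lambda>x. gram n x a b"] finite_moments_gram by blast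

lemma finite_moments_data_w: "i < d \<Longrightarrow> finite_moments (data_measure d n) (\<lambda>s. snd s i)"
  using finite_moments_data_snd[of d "\<lambda>w. w i"] finite_moments_iid_gauss_coord[of "{..<d}" i] by simp

lemma finite_moments_corr: "k < d \<Longrightarrow> finite_moments (data_measure d n) (\<lambda>s. corr d n (fst s) (snd s) k)"
  unfolding corr_eq_gram
  by (intro data_measure.finite_moments_sum finite_moments_mult
      finite_moments_data_gram finite_moments_data_w) auto

lemma integral_gram:
  assumes "a < d" "b < d"
  shows "(\<integral>x. gram n x a b \<partial>iid_gauss ({..<d} \<times> {..<n})) = real n * of_bool (a = b)"
proof -
  have "(\<integral>x. gram n x a b \<partial>iid_gauss ({..<d} \<times> {..<n}))
      = (\<Sum>j<n. \<integral>x. x (a, j) * x (b, j) \<partial>iid_gauss ({..<d} \<times> {..<n}))"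
    unfolding gram_def using assms
    by (intro Bochner_Integration.integral_sum finite_moments_integrable finite_moments_mult
        finite_moments_iid_gauss_coord) auto
  also have "\<dots> = (\<Sum>j<n. of_bool (a = b))"
    using assms by (intro sum.cong refl) (simp add: integral_iid_gauss_coord2)
  finally show ?thesis by simp
qed

lemma integral_gram_mult:
  assumes "a < d" "b < d" "c < d" "e < d"
  shows "(\<integral>x. gram n x a b * gram n x c e \<partial>iid_gauss ({..<d} \<times> {..<n})) =
    real n ^ 2 * of_bool (a = b \<and> c = e) + real n * of_bool (a = c \<and> b = e)
    + real n * of_bool (a = e \<and> b = c)"
proof -
  let ?M = "iid_gauss ({..<d} \<times> {..<n})"
  have int: "integrable ?M (\<lambda>x. x (a, j) * x (b, j) * x (c, j') * x (e, j'))" if "j < n" "j' < n" for j j'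
    using assms that
    by (intro finite_moments_integrable finite_moments_mult finite_moments_iid_gauss_coord) auto
  have "(\<integral>x. gram n x a b * gram n x c e \<partial>?M)
      = (\<integral>x. (\<Sum>j<n. \<Sum>j'<n. x (a, j) * x (b, j) * x (c, j') * x (e, j')) \<partial>?M)"
    unfolding gram_def sum_product by (simp add: mult.assoc)
  also have "\<dots> = (\<Sum>j<n. \<integral>x. (\<Sum>j'<n. x (a, j) * x (b, j) * x (c, j') * x (e, j')) \<partial>?M)"
    using int by (intro Bochner_Integration.integral_sum Bochner_Integration.integrable_sum) auto
  also have "\<dots> = (\<Sum>j<n. \<Sum>j'<n. \<integral>x. x (a, j) * x (b, j) * x (c, j') * x (e, j') \<partial>?M)"
    using int by (intro sum.cong refl Bochner_Integration.integral_sum) auto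
  also have "\<dots> = (\<Sum>j<n. \<Sum>j'<n. of_bool (a = b \<and> c = e)
      + (if j' = j then of_bool (a = c \<and> b = e) + of_bool (a = e \<and> b = c) else 0))"
    using assms by (intro sum.cong refl) (auto simp: integral_iid_gauss_coord4)
  finally show ?thesis by (simp add: sum.distrib power2_eq_square ring_distribs)
qed

lemma sum_integral_gram_mult_gram:
  assumes "m < d" "i < d"
  shows "(\<Sum>p<d. \<integral>x. gram n x m p * gram n x i p \<partial>iid_gauss ({..<d} \<times> {..<n}))
    = real n * (real n + real d + 1) * of_bool (m = i)"
proof -
  have "(\<integral>x. gram n x m p * gram n x i p \<partial>iid_gauss ({..<d} \<times> {..<n}))
      = (if m = i then (if p = m then real n ^ 2 + real n else 0) + real n else 0)" if "p < d" for p
    using assms that by (auto simp: integral_gram_mult)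
  then have "(\<Sum>p<d. \<integral>x. gram n x m p * gram n x i p \<partial>iid_gauss ({..<d} \<times> {..<n}))
      = (\<Sum>p<d. if m = i then (if p = m then real n ^ 2 + real n else 0) + real n else 0)"
    by (intro sum.cong) auto
  then show ?thesis
    using assms by (simp add: sum.distrib power2_eq_square ring_distribs)
qed

section \<open>Orthogonality to the error of the gradient step\<close>

definition resid_coef :: "nat \<Rightarrow> nat \<Rightarrow> (nat \<times> nat \<Rightarrow> real) \<Rightarrow> nat \<Rightarrow> nat \<Rightarrow> real" where
  "resid_coef d n x m p = gram n x m p / (real n + real d + 1) - of_bool (p = m)"

definition opt_resid :: "nat \<Rightarrow> nat \<Rightarrow> (nat \<times> nat \<Rightarrow> real) \<Rightarrow> (nat \<Rightarrow> real) \<Rightarrow> nat \<Rightarrow> real" where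
  "opt_resid d n x w m = corr d n x w m / (real n + real d + 1) - w m"

lemma opt_resid_eq_sum: "m < d \<Longrightarrow> opt_resid d n x w m = (\<Sum>p<d. resid_coef d n x m p * w p)"
  by (simp add: opt_resid_def resid_coef_def corr_eq_gram left_diff_distrib sum_subtractf
      sum_divide_distrib)

lemma finite_moments_resid_coef:
  assumes "m < d" "p < d"
  shows "finite_moments (iid_gauss ({..<d} \<times> {..<n})) (\<lambda>x. resid_coef d n x m p)"
  unfolding resid_coef_def using assms
  by (intro finite_moments_diff finite_moments_divide finite_moments_gram
      iid_gauss.finite_moments_const)

lemma finite_moments_opt_resid:
  "m < d \<Longrightarrow> finite_moments (data_measure d n) (\<lambda>s. opt_resid d n (fst s) (snd s) m)"
  unfolding opt_resid_eq_sum
  by (intro data_measure.finite_moments_sum finite_moments_mult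
      finite_moments_data_w finite_moments_data_fst[of d n "\<lambda>x. resid_coef d n x m p" for p]
      finite_moments_resid_coef) auto

definition resid_orth :: "nat \<Rightarrow> nat \<Rightarrow> nat \<Rightarrow> ((nat \<times> nat \<Rightarrow> real) \<times> (nat \<Rightarrow> real) \<Rightarrow> real) \<Rightarrow> bool" where
  "resid_orth d n m h \<longleftrightarrow> finite_moments (data_measure d n) h \<and>
     (\<integral>s. opt_resid d n (fst s) (snd s) m * h s \<partial>data_measure d n) = 0"

lemma resid_orth_add:
  assumes m: "m < d" and h: "resid_orth d n m h" and h': "resid_orth d n m h'"
  shows "resid_orth d n m (\<lambda>s. h s + h' s)"
proof -
  have "integrable (data_measure d n) (\<lambda>s. opt_resid d n (fst s) (snd s) m * h s)"
    "integrable (data_measure d n) (\<lambda>s. opt_resid d n (fst s) (snd s) m * h' s)"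
    using h h' by (auto simp: resid_orth_def
        intro!: finite_moments_integrable finite_moments_mult finite_moments_opt_resid[OF m])
  then show ?thesis
    using h h' by (simp add: resid_orth_def distrib_left finite_moments_add)
qed

lemma resid_orth_cmult: "resid_orth d n m h \<Longrightarrow> resid_orth d n m (\<lambda>s. c * h s)"
  by (simp add: resid_orth_def finite_moments_cmult mult.left_commute)

lemma resid_orth_sum:
  assumes "m < d" "\<And>i. i \<in> A \<Longrightarrow> resid_orth d n m (h i)"
  shows "resid_orth d n m (\<lambda>s. \<Sum>i\<in>A. h i s)"
  using assms(2)
proof (induction A rule: infinite_finite_induct)
  case (insert a A)
  then show ?case using resid_orth_add[OF assms(1), of n "h a"] by simp
qed (simp_all add: resid_orth_def data_measure.finite_moments_const)

text \<open>The residual is linear in \<open>w\<close> with coefficients depending on \<open>x\<close> alone, so the integral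
  factors over the independent \<open>x\<close> and \<open>w\<close>.\<close>
lemma resid_orth_product:
  assumes m: "m < d"
    and F: "finite_moments (iid_gauss ({..<d} \<times> {..<n})) F" and G: "finite_moments (iid_gauss {..<d}) G"
    and odd: "\<And>p. p < d \<Longrightarrow> (\<integral>w. w p * G w \<partial>iid_gauss {..<d}) = 0"
  shows "resid_orth d n m (\<lambda>s. F (fst s) * G (snd s))"
proof -
  have Gp: "finite_moments (iid_gauss {..<d}) (\<lambda>w. w p * G w)" if "p < d" for p
    using that G by (intro finite_moments_mult finite_moments_iid_gauss_coord) auto
  have "(\<integral>s. opt_resid d n (fst s) (snd s) m * (F (fst s) * G (snd s)) \<partial>data_measure d n)
      = (\<integral>s. (\<Sum>p<d. (resid_coef d n (fst s) m p * F (fst s)) * (snd s p * G (snd s))) \<partial>data_measure d n)"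
    unfolding opt_resid_eq_sum[OF m] sum_distrib_right by (simp add: mult_ac)
  also have "\<dots> = 0"
    by (subst integral_data_sum_product[where F = "\<lambda>p x. resid_coef d n x m p * F x"])
       (use m F Gp odd in \<open>auto intro: finite_moments_mult finite_moments_resid_coef\<close>)
  finally show ?thesis
    unfolding resid_orth_def using F G by (simp add: finite_moments_data_product)
qed

lemma resid_orth_const: "m < d \<Longrightarrow> resid_orth d n m (\<lambda>s. c)"
  using resid_orth_product[of m d n "\<lambda>_. c" "\<lambda>_. 1"]
  by (simp add: iid_gauss.finite_moments_const integral_iid_gauss_coord)

lemma resid_orth_gram: "m < d \<Longrightarrow> a < d \<Longrightarrow> b < d \<Longrightarrow> resid_orth d n m (\<lambda>s. gram n (fst s) a b)"
  using resid_orth_product[of m d n "\<lambda>x. gram n x a b" "\<lambda>_. 1"]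
  by (simp add: finite_moments_gram iid_gauss.finite_moments_const
      integral_iid_gauss_coord)

lemma resid_orth_gram_mult_w2:
  assumes "m < d" "a < d" "b < d" "a' < d" "b' < d"
  shows "resid_orth d n m (\<lambda>s. gram n (fst s) a b * (snd s a' * snd s b'))"
  using assms resid_orth_product[of m d n "\<lambda>x. gram n x a b" "\<lambda>w. w a' * w b'"]
  by (simp add: finite_moments_gram finite_moments_mult finite_moments_iid_gauss_coord
      integral_iid_gauss_coord3 mult.assoc[symmetric])

lemma resid_orth_corr:
  assumes m: "m < d" and i: "i < d"
  shows "resid_orth d n m (\<lambda>s. corr d n (fst s) (snd s) i)"
proof -
  let ?X = "iid_gauss ({..<d} \<times> {..<n})"
  have "(\<integral>s. opt_resid d n (fst s) (snd s) m * corr d n (fst s) (snd s) i \<partial>data_measure d n)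
      = (\<integral>s. (\<Sum>y\<in>{..<d} \<times> {..<d}. (resid_coef d n (fst s) m (fst y) * gram n (fst s) i (snd y))
             * (snd s (fst y) * snd s (snd y))) \<partial>data_measure d n)"
    unfolding opt_resid_eq_sum[OF m] corr_eq_gram sum_product sum.cartesian_product
    by (simp add: mult_ac case_prod_beta)
  also have "\<dots> = (\<Sum>y\<in>{..<d} \<times> {..<d}.
      (\<integral>x. resid_coef d n x m (fst y) * gram n x i (snd y) \<partial>?X)
      * (\<integral>w. w (fst y) * w (snd y) \<partial>iid_gauss {..<d}))"
    by (rule integral_data_sum_product[of "{..<d} \<times> {..<d}" d n
          "\<lambda>y x. resid_coef d n x m (fst y) * gram n x i (snd y)" "\<lambda>y w. w (fst y) * w (snd y)"])
       (use m i in \<open>auto intro!: finite_moments_mult finite_moments_resid_coef finite_moments_gram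
          finite_moments_iid_gauss_coord\<close>)
  also have "\<dots> = (\<Sum>p<d. \<integral>x. resid_coef d n x m p * gram n x i p \<partial>?X)"
    by (simp add: sum.cartesian_product' integral_iid_gauss_coord2)
  also have "\<dots> = (\<Sum>p<d. (\<integral>x. gram n x m p * gram n x i p \<partial>?X) / (real n + real d + 1)
      - of_bool (p = m) * (\<integral>x. gram n x i p \<partial>?X))"
    using m i by (intro sum.cong refl)
      (simp add: resid_coef_def left_diff_distrib finite_moments_integrable finite_moments_mult
        finite_moments_gram)
  also have "\<dots> = 0"
    using m i by (simp add: sum_subtractf sum_divide_distrib[symmetric] sum_integral_gram_mult_gram
        integral_gram)
  finally show ?thesis
    unfolding resid_orth_def using m i by (simp add: finite_moments_corr)
qed

lemma resid_orth_lsa_update: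
  "m < d \<Longrightarrow> resid_orth d n m (\<lambda>s. lsa_update d n V W (fst s) (snd s) r)"
  unfolding lsa_update_eq_gram
  by (intro resid_orth_add resid_orth_sum resid_orth_cmult resid_orth_gram resid_orth_corr
      resid_orth_gram_mult_w2 resid_orth_const) auto

section \<open>Decomposition of the loss\<close>

definition opt_error :: "nat \<Rightarrow> nat \<Rightarrow> (nat \<times> nat \<Rightarrow> real) \<Rightarrow> (nat \<Rightarrow> real) \<Rightarrow> nat \<Rightarrow> real" where
  "opt_error d n x w r = (if d < r \<and> r \<le> 2 * d then opt_resid d n x w (r - d - 1) else 0)"

definition excess_error ::
  "nat \<Rightarrow> nat \<Rightarrow> real mat \<Rightarrow> real mat \<Rightarrow> (nat \<times> nat \<Rightarrow> real) \<Rightarrow> (nat \<Rightarrow> real) \<Rightarrow> nat \<Rightarrow> real" where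
  "excess_error d n V W x w r = lsa_update d n V W x w r / real n
     - (if d < r \<and> r \<le> 2 * d then corr d n x w (r - d - 1) / (real n + real d + 1) else 0)"

lemma sq_norm_pred_error:
  assumes V: "V \<in> carrier_mat (2 * d + 2) (2 * d + 2)" and W: "W \<in> carrier_mat (2 * d + 2) (2 * d + 2)"
  shows "sq_norm_vec (lsa_pred n (Z_in (X_of d n x) (w_of d w) (0\<^sub>v d)) V W - target d (w_of d w))
    = (\<Sum>r<2 * d + 2. (opt_error d n x w r + excess_error d n V W x w r)\<^sup>2)"
proof -
  have "lsa_pred n (Z_in (X_of d n x) (w_of d w) (0\<^sub>v d)) V W - target d (w_of d w)
      = vec (2 * d + 2) (\<lambda>r. opt_error d n x w r + excess_error d n V W x w r)"
    by (rule eq_vecI) (auto simp: lsa_pred_coords[OF V W] target_def opt_error_def excess_error_def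
        opt_resid_def w_of_index)
  then show ?thesis
    by (simp add: sq_norm_vec_def scalar_prod_def atLeast0LessThan power2_eq_square)
qed

lemma finite_moments_lsa_update:
  "finite_moments (data_measure d n) (\<lambda>s. lsa_update d n V W (fst s) (snd s) r)"
  unfolding lsa_update_eq_gram
  by (intro finite_moments_add data_measure.finite_moments_sum finite_moments_cmult finite_moments_mult
      finite_moments_data_gram finite_moments_corr finite_moments_data_w data_measure.finite_moments_const)
     auto

lemma finite_moments_excess_error:
  "finite_moments (data_measure d n) (\<lambda>s. excess_error d n V W (fst s) (snd s) r)"
  unfolding excess_error_def
  by (cases "d < r \<and> r \<le> 2 * d")
     (auto intro!: finite_moments_diff finite_moments_divide finite_moments_lsa_update
       finite_moments_corr data_measure.finite_moments_const)

lemma finite_moments_opt_error: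
  "finite_moments (data_measure d n) (\<lambda>s. opt_error d n (fst s) (snd s) r)"
  by (cases "d < r \<and> r \<le> 2 * d")
     (auto simp: opt_error_def intro!: finite_moments_opt_resid data_measure.finite_moments_const)

lemma integral_opt_error_mult_excess_error:
  "(\<integral>s. opt_error d n (fst s) (snd s) r * excess_error d n V W (fst s) (snd s) r \<partial>data_measure d n) = 0"
proof (cases "d < r \<and> r \<le> 2 * d")
  case True
  define m where "m = r - d - 1"
  have m: "m < d" using True by (auto simp: m_def)
  have "resid_orth d n m (\<lambda>s. inverse (real n) * lsa_update d n V W (fst s) (snd s) r
      + (- inverse (real n + real d + 1)) * corr d n (fst s) (snd s) m)"
    by (intro resid_orth_add resid_orth_cmult resid_orth_lsa_update resid_orth_corr m)
  then show ?thesis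
    using True
    by (simp add: resid_orth_def opt_error_def excess_error_def m_def divide_inverse mult.commute)
qed (auto simp: opt_error_def)

lemma loss_eval_decomp:
  assumes V: "V \<in> carrier_mat (2 * d + 2) (2 * d + 2)" and W: "W \<in> carrier_mat (2 * d + 2) (2 * d + 2)"
  shows "loss_eval d n V W = ennreal ((1 / 2) *
    ((\<integral>s. (\<Sum>r<2 * d + 2. (opt_error d n (fst s) (snd s) r)\<^sup>2) \<partial>data_measure d n)
     + (\<integral>s. (\<Sum>r<2 * d + 2. (excess_error d n V W (fst s) (snd s) r)\<^sup>2) \<partial>data_measure d n)))"
proof -
  let ?M = "data_measure d n"
  let ?e = "\<lambda>s r. opt_error d n (fst s) (snd s) r"
  let ?D = "\<lambda>s r. excess_error d n V W (fst s) (snd s) r"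
  have int: "integrable ?M (\<lambda>s. (?e s r)\<^sup>2)" "integrable ?M (\<lambda>s. (?D s r)\<^sup>2)"
    "integrable ?M (\<lambda>s. 2 * (?e s r * ?D s r))" for r
    by (intro finite_moments_integrable finite_moments_mult finite_moments_cmult
        data_measure.finite_moments_power finite_moments_opt_error finite_moments_excess_error)+
  have "loss_eval d n V W = (\<integral>\<^sup>+s. ennreal ((1 / 2) * (\<Sum>r<2 * d + 2. (?e s r + ?D s r)\<^sup>2)) \<partial>?M)"
    unfolding loss_eval_def data_measure_def[symmetric] sq_norm_pred_error[OF V W] ..
  also have "\<dots> = ennreal (\<integral>s. (1 / 2) * (\<Sum>r<2 * d + 2. (?e s r + ?D s r)\<^sup>2) \<partial>?M)"
    by (intro nn_integral_eq_integral finite_moments_integrable finite_moments_cmult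
        data_measure.finite_moments_sum data_measure.finite_moments_power finite_moments_add
        finite_moments_opt_error finite_moments_excess_error AE_I2 mult_nonneg_nonneg sum_nonneg)
       auto
  also have "(\<integral>s. (1 / 2) * (\<Sum>r<2 * d + 2. (?e s r + ?D s r)\<^sup>2) \<partial>?M)
      = (1 / 2) * (\<Sum>r<2 * d + 2. \<integral>s. (?e s r)\<^sup>2 + (?D s r)\<^sup>2 + 2 * (?e s r * ?D s r) \<partial>?M)"
    using int by (simp add: power2_sum mult.assoc Bochner_Integration.integral_sum)
  also have "\<dots> = (1 / 2) *
      ((\<integral>s. (\<Sum>r<2 * d + 2. (?e s r)\<^sup>2) \<partial>?M) + (\<integral>s. (\<Sum>r<2 * d + 2. (?D s r)\<^sup>2) \<partial>?M))"
    using int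
    by (simp add: integral_opt_error_mult_excess_error Bochner_Integration.integral_sum sum.distrib)
  finally show ?thesis .
qed

section \<open>Global minimizers\<close>

lemma continuous_on_excess_error:
  "continuous_on UNIV (\<lambda>s. excess_error d n V W (fst s) (snd s) r)"
proof -
  have [continuous_intros]: "continuous_on UNIV (\<lambda>s. label d (fst s) (snd s) j)" for j
    unfolding label_def by (intro continuous_intros)
  have [continuous_intros]: "continuous_on UNIV (\<lambda>s. attn_score d W (fst s) (snd s) j)" for j
    unfolding attn_score_def by (intro continuous_intros)
  have [continuous_intros]: "continuous_on UNIV (\<lambda>s. corr d n (fst s) (snd s) k)" for k
    unfolding corr_def by (intro continuous_intros)
  have [continuous_intros]: "continuous_on UNIV (\<lambda>s. lsa_update d n V W (fst s) (snd s) r)"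
    unfolding lsa_update_def by (intro continuous_intros)
  show ?thesis
  proof (cases "d < r \<and> r \<le> 2 * d")
    case True
    show ?thesis unfolding excess_error_def divide_inverse if_P[OF True] by (intro continuous_intros)
  next
    case False
    show ?thesis unfolding excess_error_def divide_inverse if_not_P[OF False] by (intro continuous_intros)
  qed
qed

lemma excess_error_cong:
  assumes "\<And>i j. i < d \<Longrightarrow> j < n \<Longrightarrow> x (i, j) = x' (i, j)" and "\<And>i. i < d \<Longrightarrow> w i = w' i"
  shows "excess_error d n V W x w r = excess_error d n V W x' w' r"
proof -
  have label: "label d x w j = label d x' w' j" if "j < n" for j
    unfolding label_def using assms that by (intro sum.cong) auto
  have "attn_score d W x w j = attn_score d W x' w' j" if "j < n" for j
    unfolding attn_score_def using assms that label[OF that] by (auto intro!: sum.cong)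
  then have "lsa_update d n V W x w r = lsa_update d n V W x' w' r"
    unfolding lsa_update_def using assms label
    by (auto intro!: sum.cong arg_cong2[where f = "(+)"] arg_cong2[where f = "(*)"])
  moreover have "corr d n x w k = corr d n x' w' k" if "k < d" for k
    unfolding corr_def using assms that label by (auto intro!: sum.cong)
  ultimately show ?thesis
    unfolding excess_error_def by (cases "d < r \<and> r \<le> 2 * d") auto
qed

definition V_opt :: "nat \<Rightarrow> nat \<Rightarrow> real mat" where
  "V_opt d n = mat (2 * d + 2) (2 * d + 2) (\<lambda>(r, k).
     if d < r \<and> r \<le> 2 * d \<and> k = r - d - 1 then real n / (real n + real d + 1) else 0)"

definition W_opt :: "nat \<Rightarrow> real mat" where
  "W_opt d = mat (2 * d + 2) (2 * d + 2) (\<lambda>(i, k). if i = d \<and> k = 2 * d + 1 then 1 else 0)"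

lemma V_opt_carrier: "V_opt d n \<in> carrier_mat (2 * d + 2) (2 * d + 2)"
  by (simp add: V_opt_def)

lemma W_opt_carrier: "W_opt d \<in> carrier_mat (2 * d + 2) (2 * d + 2)"
  by (simp add: W_opt_def)

lemma excess_error_opt:
  assumes "n \<ge> 1" "r < 2 * d + 2"
  shows "excess_error d n (V_opt d n) (W_opt d) x w r = 0"
proof -
  have "attn_score d (W_opt d) x w j = label d x w j" for j
    by (simp add: attn_score_def W_opt_def)
  moreover have "V_opt d n $$ (r, d) = 0" "W_opt d $$ (2 * d + 1, 2 * d + 1) = 0"
    using assms(2) by (auto simp: V_opt_def W_opt_def)
  ultimately have "lsa_update d n (V_opt d n) (W_opt d) x w r
      = (\<Sum>k<d. V_opt d n $$ (r, k) * corr d n x w k)"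
    by (simp add: lsa_update_def corr_def)
  also have "\<dots> = (if d < r \<and> r \<le> 2 * d
      then real n / (real n + real d + 1) * corr d n x w (r - d - 1) else 0)"
    using assms(2) by (auto simp: V_opt_def if_distrib[of "\<lambda>v. v * _"] cong: if_cong)
  finally show ?thesis
    using assms(1) by (simp add: excess_error_def)
qed

lemma excess_error_eq_0_if_minimal:
  assumes n: "n \<ge> 1"
    and V: "V \<in> carrier_mat (2 * d + 2) (2 * d + 2)" and W: "W \<in> carrier_mat (2 * d + 2) (2 * d + 2)"
    and min: "loss_eval d n V W \<le> loss_eval d n (V_opt d n) (W_opt d)"
    and r: "r < 2 * d + 2"
  shows "excess_error d n V W x w r = 0"
proof -
  let ?M = "data_measure d n"
  let ?E = "\<integral>s. (\<Sum>r<2 * d + 2. (opt_error d n (fst s) (snd s) r)\<^sup>2) \<partial>?M"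
  let ?F = "\<lambda>s. \<Sum>r<2 * d + 2. (excess_error d n V W (fst s) (snd s) r)\<^sup>2"
  have "(\<lambda>s. \<Sum>r<2 * d + 2. (excess_error d n (V_opt d n) (W_opt d) (fst s) (snd s) r)\<^sup>2)
      = (\<lambda>s. 0)"
    using n by (intro ext sum.neutral) (simp add: excess_error_opt)
  then have "loss_eval d n (V_opt d n) (W_opt d) = ennreal ((1 / 2) * ?E)"
    using loss_eval_decomp[OF V_opt_carrier W_opt_carrier, of d n] by simp
  moreover have "loss_eval d n V W = ennreal ((1 / 2) * (?E + integral\<^sup>L ?M ?F))"
    using loss_eval_decomp[OF V W] by simp
  moreover have "?E \<ge> 0" "integral\<^sup>L ?M ?F \<ge> 0"
    by (intro integral_nonneg_AE AE_I2 sum_nonneg zero_le_power2)+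
  ultimately have "integral\<^sup>L ?M ?F = 0"
    using min by (simp add: ennreal_le_iff)
  moreover have "integrable ?M ?F"
    by (intro finite_moments_integrable data_measure.finite_moments_sum
        data_measure.finite_moments_power finite_moments_excess_error)
  moreover have "AE s in ?M. 0 \<le> ?F s"
    by (intro AE_I2 sum_nonneg zero_le_power2)
  ultimately have "AE s in ?M. ?F s = 0"
    using integral_nonneg_eq_0_iff_AE by blast
  then have "?F (x, w) = 0"
    unfolding data_measure_def
    by (intro AE_iid_gauss_pair_zero_imp_zero continuous_on_sum continuous_on_power
        continuous_on_excess_error sum.cong excess_error_cong arg_cong[where f = "\<lambda>t. t\<^sup>2"]) auto
  then show ?thesis
    using r by (simp add: sum_nonneg_eq_0_iff del: sum.lessThan_Suc)
qed

lemma lsa_pred_if_minimal: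
  assumes "n \<ge> 1"
    and V: "V \<in> carrier_mat (2 * d + 2) (2 * d + 2)" and W: "W \<in> carrier_mat (2 * d + 2) (2 * d + 2)"
    and "loss_eval d n V W \<le> loss_eval d n (V_opt d n) (W_opt d)"
  shows "lsa_pred n (Z_in (X_of d n x) (w_of d w) (0\<^sub>v d)) V W =
    vec (2 * d + 2) (\<lambda>r. if d < r \<and> r \<le> 2 * d then corr d n x w (r - d - 1) / (real n + real d + 1)
                        else if r = 2 * d + 1 then 1 else 0)"
  using excess_error_eq_0_if_minimal[OF assms, of _ x w]
  by (auto simp: lsa_pred_coords[OF V W] excess_error_def intro!: eq_vecI)

theorem theorem3p1:
  fixes d n :: nat and Vs Ws :: "real mat"
  assumes "d \<ge> 1" and "n \<ge> 1"
    and "Vs \<in> carrier_mat (de d) (de d)" and "Ws \<in> carrier_mat (de d) (de d)"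
    and "\<forall>V \<in> carrier_mat (de d) (de d). \<forall>W \<in> carrier_mat (de d) (de d).
           loss_eval d n Vs Ws \<le> loss_eval d n V W"
  shows "\<forall>X \<in> carrier_mat d n. \<forall>w \<in> carrier_vec d.
           lsa_pred n (Z_in X w (0\<^sub>v d)) Vs Ws =
             vec (de d) (\<lambda>i. if d < i \<and> i \<le> 2 * d
                  then ((real n / real (n + d + 1)) / real n) * (X *\<^sub>v labels X w) $ (i - d - 1)
                  else if i = 2 * d + 1 then 1 else 0)"
proof (intro ballI)
  fix X :: "real mat" and w :: "real vec"
  assume X: "X \<in> carrier_mat d n" and w: "w \<in> carrier_vec d"
  have Vs: "Vs \<in> carrier_mat (2 * d + 2) (2 * d + 2)"
    and Ws: "Ws \<in> carrier_mat (2 * d + 2) (2 * d + 2)"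
    using assms(3,4) by (simp_all add: de_def)
  have min: "loss_eval d n Vs Ws \<le> loss_eval d n (V_opt d n) (W_opt d)"
    using assms(5) V_opt_carrier W_opt_carrier by (simp add: de_def)
  define x where "x = (\<lambda>(i, j). X $$ (i, j))"
  define v where "v = (\<lambda>i. w $ i)"
  have X_eq: "X_of d n x = X" and w_eq: "w_of d v = w"
    using X w by (auto simp: X_of_def w_of_def x_def v_def)
  have pred: "lsa_pred n (Z_in X w (0\<^sub>v d)) Vs Ws =
    vec (2 * d + 2) (\<lambda>r. if d < r \<and> r \<le> 2 * d then corr d n x v (r - d - 1) / (real n + real d + 1)
                        else if r = 2 * d + 1 then 1 else 0)"
    using lsa_pred_if_minimal[OF assms(2) Vs Ws min, of x v] unfolding X_eq w_eq .
  have corr: "corr d n x v m = (X *\<^sub>v labels X w) $ m" if "m < d" for m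
    using corr_eq_mult_labels[OF that, of n x v] unfolding X_eq w_eq .
  have "real n / real (n + d + 1) / real n = 1 / (real n + real d + 1)"
    using assms(2) by simp
  then show "lsa_pred n (Z_in X w (0\<^sub>v d)) Vs Ws = vec (de d) (\<lambda>i. if d < i \<and> i \<le> 2 * d
      then real n / real (n + d + 1) / real n * (X *\<^sub>v labels X w) $ (i - d - 1)
      else if i = 2 * d + 1 then 1 else 0)"
    unfolding pred de_def by (intro eq_vecI) (auto simp: corr)
qed

end
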